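(* Let $\rho_{1,n},\rho_{2,n}>0$ and $c_n=o(1)$ be such that \begin{align*} &\mathbb{P}\Big(\max_{e\in\mathcal{E}_{tr}}\sup_{u\in\mathcal{F}_w,\Phi\in\mathcal{F}_{\Phi}}\big|\tfrac{1}{n_e}\langle u\circ\Phi(X^e),\bm{y}^e\rangle-\mathbb{E}[ u\circ\Phi(\bm{x}^{e})\,y^{e}]\big|\leq \tfrac{\rho_{1,n}}{2}\Big)\geq 1-c_n,\\ &\mathbb{P}\Big(\max_{e\in\mathcal{E}_{tr}}\sup_{u\in\mathcal{F}_w,\Phi\in\mathcal{F}_{\Phi}}\big|\tfrac{1}{n_e}\textstyle\sum_{i=1}^{n_e}\{u\circ\Phi(\bm{x}_i^e)\}^2-\mathbb{E}[\{u\circ\Phi(\bm{x}^{e})\}^2]\big|\leq \tfrac{\rho_{2,n}}{2}\Big)\geq 1-c_n . \end{align*} Suppose that for all $\Phi\in\mathcal F_\Phi\setminus\mathcal I^*_\Phi$, either $\max_{e,e'\in\mathcal{E}_{tr}} \sup_{u\in\mathcal{F}_{w}}|\mathbb{E}[ u\circ\Phi(\bm{x}^e)y^e]-\mathbb{E}[u\circ\Phi(\bm{x}^{e'})y^{e'}]|>2\rho_{1,n}$ or $\max_{e,e'\in\mathcal{E}_{tr}} \sup_{u\in\mathcal{F}_{w}} |\mathbb{E}[\{ u\circ\Phi(\bm{x}^e)\}^2]-\mathbb{E}[\{ u\circ\Phi(\bm{x}^{e'})\}^2]|>2\rho_{2,n}$, and that $\mathcal I^*_\Phi\neq\emptyset$.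 Then, with probability at least $1-2c_n$, the empirical FAIRM estimator (with tuning parameters $\rho_{1,n},\rho_{2,n}$) satisfies \[ \max_{e\in\mathcal{E}_{all}}\{R^e(\hat{w}^{(\mathrm{FAIRM})}\circ\widehat{\Phi}^{(\mathrm{FAIRM})})-R^e(w^*\circ\Phi^* )\}\leq 4\rho_{1,n}+2\rho_{2,n}. \]
   Context: Finite set of environments $\mathcal E_{all}\supseteq\mathcal E_{tr}$; for each $e$, $(\bm x^e,y^e)\in\mathbb R^p\times\mathbb R$ has distribution $P^e$; weights $\alpha^*_e>0$ on $\mathcal E_{all}$ summing to one. For each $e\in\mathcal E_{tr}$ we observe $n_e$ i.i.d. samples $(\bm x^e_i,y^e_i)\sim P^e$, forming $X^e\in\mathbb R^{n_e\times p}$ and $\bm y^e\in\mathbb R^{n_e}$; $f(X^e)$ denotes the vector $(f(\bm x^e_i))_{i}$. $\mathcal F_\Phi$: class of representations $\Phi:\mathbb R^p\to\mathcal H$; $\mathcal F_w$: class of functions $\mathcal H\to\mathbb R$. $R^e(f)=\mathbb E[(y-f(\bm x))^2]$ for $(\bm x,y)\sim P^e$ independent of $f$. $\mathcal I^*_\Phi$: the set of $\Phi\in\mathcal F_\Phi$ with $\max_{e,e'\in\mathcal E_{all}}\sup_{u\in\mathcal F_w}|\mathbb E[u\circ\Phi(\bm x^e)y^e]-\mathbb E[u\circ\Phi(\bm x^{e'})y^{e'}]|=0$ and $\max_{e,e'\in\mathcal E_{all}}\sup_{u\in\mathcal F_w}|\mathbb E[\{u\circ\Phi(\bm x^e)\}^2]-\mathbb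 E[\{u\circ\Phi(\bm x^{e'})\}^2]|=0$. Full-info FAIRM: $(w^*,\Phi^* )\in\arg\min_{w\in\mathcal F_w,\Phi\in\mathcal I^*_\Phi}\sum_{e\in\mathcal E_{all}}\alpha^*_e\mathbb E[(y^e-w\circ\Phi(\bm x^e))^2]$. Empirical FAIRM: $(\hat w^{(\mathrm{FAIRM})},\widehat\Phi^{(\mathrm{FAIRM})})\in\arg\min_{w\in\mathcal F_w,\Phi\in\mathcal F_\Phi}\sum_{e\in\mathcal E_{tr}}\|\bm y^e-w\circ\Phi(X^e)\|_2^2$ subject to $\max_{e,e'\in\mathcal E_{tr}}\sup_{u\in\mathcal F_w}|\frac1{n_e}\langle u\circ\Phi(X^e),\bm y^e\rangle-\frac1{n_{e'}}\langle u\circ\Phi(X^{e'}),\bm y^{e'}\rangle|\le\rho_{1,n}$ and $\max_{e,e'\in\mathcal E_{tr}}\sup_{u\in\mathcal F_w}|\frac1{n_e}\sum_{i=1}^{n_e}\{u\circ\Phi(\bm x^e_i)\}^2-\frac1{n_{e'}}\sum_{i=1}^{n_{e'}}\{u\circ\Phi(\bm x^{e'}_i)\}^2|\le\rho_{2,n}$. *)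

theory Defs
  imports "HOL-Probability.Probability"
begin

text \<open>P e is the law of (x^e, y^e) on R^p x R. Expectations are Lebesgue integrals.\<close>

definition pop_xy :: "('x \<times> real) measure \<Rightarrow> ('h \<Rightarrow> real) \<Rightarrow> ('x \<Rightarrow> 'h) \<Rightarrow> real" where
  "pop_xy P u \<Phi> = (\<integral>z. u (\<Phi> (fst z)) * snd z \<partial>P)"

definition pop_sq :: "('x \<times> real) measure \<Rightarrow> ('h \<Rightarrow> real) \<Rightarrow> ('x \<Rightarrow> 'h) \<Rightarrow> real" where
  "pop_sq P u \<Phi> = (\<integral>z. (u (\<Phi> (fst z)))\<^sup>2 \<partial>P)"

definition risk :: "('x \<times> real) measure \<Rightarrow> ('x \<Rightarrow> real) \<Rightarrow> real" where
  "risk P f = (\<integral>z. (snd z - f (fst z))\<^sup>2 \<partial>P)"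

definition inv_dev :: "'env set \<Rightarrow> ('h \<Rightarrow> real) set \<Rightarrow> ('env \<Rightarrow> ('h \<Rightarrow> real) \<Rightarrow> real) \<Rightarrow> ereal" where
  "inv_dev E Fw g = (SUP e\<in>E. SUP e'\<in>E. SUP u\<in>Fw. ereal \<bar>g e u - g e' u\<bar>)"

definition inv_set :: "'env set \<Rightarrow> ('env \<Rightarrow> ('x \<times> real) measure) \<Rightarrow> ('h \<Rightarrow> real) set
    \<Rightarrow> ('x \<Rightarrow> 'h) set \<Rightarrow> ('x \<Rightarrow> 'h) set" where
  "inv_set Eall P Fw F\<Phi> = {\<Phi>\<in>F\<Phi>. inv_dev Eall Fw (\<lambda>e u. pop_xy (P e) u \<Phi>) = 0
                                \<and> inv_dev Eall Fw (\<lambda>e u. pop_sq (P e) u \<Phi>) = 0}"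

definition fairm_full :: "'env set \<Rightarrow> ('env \<Rightarrow> real) \<Rightarrow> ('env \<Rightarrow> ('x \<times> real) measure) \<Rightarrow>
    ('h \<Rightarrow> real) set \<Rightarrow> ('x \<Rightarrow> 'h) set \<Rightarrow> (('h \<Rightarrow> real) \<times> ('x \<Rightarrow> 'h)) set" where
  "fairm_full Eall \<alpha> P Fw F\<Phi> =
     {(w, \<Phi>). w \<in> Fw \<and> \<Phi> \<in> inv_set Eall P Fw F\<Phi> \<and>
        (\<forall>w'\<in>Fw. \<forall>\<Phi>'\<in>inv_set Eall P Fw F\<Phi>.
           (\<Sum>e\<in>Eall. \<alpha> e * risk (P e) (w \<circ> \<Phi>)) \<le> (\<Sum>e\<in>Eall. \<alpha> e * risk (P e) (w' \<circ> \<Phi>')))}"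

text \<open>Samples: (X e i, Y e i), i < n e, for e in E_tr (0-based indexing).\<close>

definition emp_xy :: "('env \<Rightarrow> nat) \<Rightarrow> ('env \<Rightarrow> nat \<Rightarrow> 'x) \<Rightarrow> ('env \<Rightarrow> nat \<Rightarrow> real) \<Rightarrow> 'env
    \<Rightarrow> ('h \<Rightarrow> real) \<Rightarrow> ('x \<Rightarrow> 'h) \<Rightarrow> real" where
  "emp_xy n X Y e u \<Phi> = (1 / real (n e)) * (\<Sum>i<n e. u (\<Phi> (X e i)) * Y e i)"

definition emp_sq :: "('env \<Rightarrow> nat) \<Rightarrow> ('env \<Rightarrow> nat \<Rightarrow> 'x) \<Rightarrow> 'env
    \<Rightarrow> ('h \<Rightarrow> real) \<Rightarrow> ('x \<Rightarrow> 'h) \<Rightarrow> real" where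
  "emp_sq n X e u \<Phi> = (1 / real (n e)) * (\<Sum>i<n e. (u (\<Phi> (X e i)))\<^sup>2)"

definition fairm_feasible :: "'env set \<Rightarrow> ('env \<Rightarrow> nat) \<Rightarrow> ('env \<Rightarrow> nat \<Rightarrow> 'x) \<Rightarrow> ('env \<Rightarrow> nat \<Rightarrow> real)
    \<Rightarrow> ('h \<Rightarrow> real) set \<Rightarrow> ('x \<Rightarrow> 'h) set \<Rightarrow> real \<Rightarrow> real \<Rightarrow> (('h \<Rightarrow> real) \<times> ('x \<Rightarrow> 'h)) set" where
  "fairm_feasible Etr n X Y Fw F\<Phi> \<rho>1 \<rho>2 =
     {(w, \<Phi>). w \<in> Fw \<and> \<Phi> \<in> F\<Phi> \<and>
        inv_dev Etr Fw (\<lambda>e u. emp_xy n X Y e u \<Phi>) \<le> ereal \<rho>1 \<and>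
        inv_dev Etr Fw (\<lambda>e u. emp_sq n X e u \<Phi>) \<le> ereal \<rho>2}"

definition emp_loss :: "'env set \<Rightarrow> ('env \<Rightarrow> nat) \<Rightarrow> ('env \<Rightarrow> nat \<Rightarrow> 'x) \<Rightarrow> ('env \<Rightarrow> nat \<Rightarrow> real)
    \<Rightarrow> ('x \<Rightarrow> real) \<Rightarrow> real" where
  "emp_loss Etr n X Y f = (\<Sum>e\<in>Etr. \<Sum>i<n e. (Y e i - f (X e i))\<^sup>2)"

definition fairm_emp :: "'env set \<Rightarrow> ('env \<Rightarrow> nat) \<Rightarrow> ('env \<Rightarrow> nat \<Rightarrow> 'x) \<Rightarrow> ('env \<Rightarrow> nat \<Rightarrow> real)
    \<Rightarrow> ('h \<Rightarrow> real) set \<Rightarrow> ('x \<Rightarrow> 'h) set \<Rightarrow> real \<Rightarrow> real \<Rightarrow> (('h \<Rightarrow> real) \<times> ('x \<Rightarrow> 'h)) set" where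
  "fairm_emp Etr n X Y Fw F\<Phi> \<rho>1 \<rho>2 =
     {(w, \<Phi>) \<in> fairm_feasible Etr n X Y Fw F\<Phi> \<rho>1 \<rho>2.
        \<forall>(w', \<Phi>') \<in> fairm_feasible Etr n X Y Fw F\<Phi> \<rho>1 \<rho>2.
          emp_loss Etr n X Y (w \<circ> \<Phi>) \<le> emp_loss Etr n X Y (w' \<circ> \<Phi>')}"

end

theory Submission
  imports Defs
begin

text \<open>
  On the intersection of the two concentration events, which has probability at least
  1 - 2 c_n by the union bound, empirical and population moments differ by at most
  \<rho>/2 uniformly. Hence every empirically feasible \<Phi> has population deviations at most
  2 \<rho>, so by the separation condition it is exactly invariant, while the invariant
  pair (w*, \<Phi>*) is empirically feasible. For an invariant representation the risk
  R^e(w \<circ> \<Phi>) = E[y^2] - 2 E[w(\<Phi> x) y] + E[w(\<Phi> x)^2] depends on e only through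
  E[y^2], so the excess risk over (w*, \<Phi>*) is the same in all environments. Optimality
  of the estimator for the pooled empirical loss makes its empirical excess risk
  nonpositive in some training environment, and passing to population moments there
  costs at most 2 \<rho>_1 + \<rho>_2.
\<close>

lemma (in prob_space) prob_Int_ge:
  assumes "A \<in> events" "B \<in> events"
  shows "prob A + prob B - 1 \<le> prob (A \<inter> B)"
  using measure_Un3[of A M B] assms prob_le_1[of "A \<union> B"] by (simp add: fmeasurable_eq_sets)

lemma (in prob_space) ex_likely_event_if_two_likely:
  assumes "prob {x \<in> space M. A x} \<ge> 1 - c" "prob {x \<in> space M. B x} \<ge> 1 - c"
    and "\<And>x. x \<in> space M \<Longrightarrow> A x \<Longrightarrow> B x \<Longrightarrow> C x"
  shows "\<exists>S\<in>events. prob S \<ge> 1 - 2 * c \<and> (\<forall>x\<in>S. C x)"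
proof (cases "{x \<in> space M. A x} \<in> events \<and> {x \<in> space M. B x} \<in> events")
  case True
  then have "prob ({x \<in> space M. A x} \<inter> {x \<in> space M. B x}) \<ge> 1 - 2 * c"
    using prob_Int_ge assms(1,2) by fastforce
  with True show ?thesis
    using assms(3) by (intro bexI[of _ "{x \<in> space M. A x} \<inter> {x \<in> space M. B x}"]) auto
next
  case False
  \<comment> \<open>a non-measurable set has measure 0, so the hypotheses force c \<ge> 1\<close>
  then have "c \<ge> 1"
    using assms(1,2) by (auto simp: measure_notin_sets)
  then show ?thesis by (intro bexI[of _ "{}"]) auto
qed

lemma integrable_mult_if_square_integrable:
  fixes f g :: "'a \<Rightarrow> real"
  assumes "f \<in> borel_measurable M" "g \<in> borel_measurable M"
    and "integrable M (\<lambda>x. (f x)\<^sup>2)" "integrable M (\<lambda>x. (g x)\<^sup>2)"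
  shows "integrable M (\<lambda>x. f x * g x)"
proof (rule Bochner_Integration.integrable_bound)
  show "integrable M (\<lambda>x. (f x)\<^sup>2 + (g x)\<^sup>2)"
    using assms(3,4) by simp
  show "(\<lambda>x. f x * g x) \<in> borel_measurable M"
    using assms(1,2) by measurable
  have "\<bar>a * b\<bar> \<le> a\<^sup>2 + b\<^sup>2" for a b :: real
  proof -
    have "2 * \<bar>a\<bar> * \<bar>b\<bar> \<le> a\<^sup>2 + b\<^sup>2"
      using sum_squares_bound[of "\<bar>a\<bar>" "\<bar>b\<bar>"] by simp
    moreover have "0 \<le> \<bar>a\<bar> * \<bar>b\<bar>"
      by simp
    ultimately show ?thesis
      unfolding abs_mult by linarith
  qed
  then show "AE x in M. norm (f x * g x) \<le> norm ((f x)\<^sup>2 + (g x)\<^sup>2)"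
    by simp
qed

text \<open>The risk minus E[y^2]: the part of the squared loss that depends on the predictor.\<close>

definition pop_reduced_risk :: "('x \<times> real) measure \<Rightarrow> ('h \<Rightarrow> real) \<Rightarrow> ('x \<Rightarrow> 'h) \<Rightarrow> real" where
  "pop_reduced_risk Q w \<Phi> = pop_sq Q w \<Phi> - 2 * pop_xy Q w \<Phi>"

definition emp_reduced_risk :: "('env \<Rightarrow> nat) \<Rightarrow> ('env \<Rightarrow> nat \<Rightarrow> 'x) \<Rightarrow> ('env \<Rightarrow> nat \<Rightarrow> real) \<Rightarrow> 'env
    \<Rightarrow> ('h \<Rightarrow> real) \<Rightarrow> ('x \<Rightarrow> 'h) \<Rightarrow> real" where
  "emp_reduced_risk n X Y e w \<Phi> = emp_sq n X e w \<Phi> - 2 * emp_xy n X Y e w \<Phi>"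

lemma risk_comp_eq_pop_reduced_risk:
  fixes Q :: "('x \<times> real) measure"
  assumes "snd \<in> borel_measurable Q" "integrable Q (\<lambda>z. (snd z)\<^sup>2)"
    and "(\<lambda>z. w (\<Phi> (fst z))) \<in> borel_measurable Q" "integrable Q (\<lambda>z. (w (\<Phi> (fst z)))\<^sup>2)"
  shows "risk Q (w \<circ> \<Phi>) = (\<integral>z. (snd z)\<^sup>2 \<partial>Q) + pop_reduced_risk Q w \<Phi>"
proof -
  have "integrable Q (\<lambda>z. w (\<Phi> (fst z)) * snd z)"
    using integrable_mult_if_square_integrable assms(1-4) by blast
  moreover have "(snd z - (w \<circ> \<Phi>) (fst z))\<^sup>2
      = (snd z)\<^sup>2 + ((w (\<Phi> (fst z)))\<^sup>2 - 2 * (w (\<Phi> (fst z)) * snd z))" for z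
    by (simp add: power2_diff algebra_simps)
  ultimately show ?thesis
    using assms(2,4) by (simp add: risk_def pop_reduced_risk_def pop_xy_def pop_sq_def)
qed

lemma sum_sq_residual_eq:
  "(\<Sum>i<n e. (Y e i - (w \<circ> \<Phi>) (X e i))\<^sup>2)
    = (\<Sum>i<n e. (Y e i)\<^sup>2) + real (n e) * emp_reduced_risk n X Y e w \<Phi>"
proof -
  have "real (n e) * emp_reduced_risk n X Y e w \<Phi>
      = (\<Sum>i<n e. (w (\<Phi> (X e i)))\<^sup>2) - 2 * (\<Sum>i<n e. w (\<Phi> (X e i)) * Y e i)"
    by (cases "n e = 0") (simp_all add: emp_reduced_risk_def emp_xy_def emp_sq_def right_diff_distrib)
  moreover have "(Y e i - (w \<circ> \<Phi>) (X e i))\<^sup>2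
      = (Y e i)\<^sup>2 + ((w (\<Phi> (X e i)))\<^sup>2 - 2 * (w (\<Phi> (X e i)) * Y e i))" for i
    by (simp add: power2_diff algebra_simps)
  ultimately show ?thesis
    by (simp add: sum.distrib sum_subtractf sum_distrib_left)
qed

lemma emp_loss_comp_eq:
  "emp_loss Etr n X Y (w \<circ> \<Phi>)
    = (\<Sum>e\<in>Etr. \<Sum>i<n e. (Y e i)\<^sup>2) + (\<Sum>e\<in>Etr. real (n e) * emp_reduced_risk n X Y e w \<Phi>)"
  unfolding emp_loss_def sum_sq_residual_eq by (simp add: sum.distrib)

lemma inv_dev_le_ereal_iff:
  "inv_dev E Fw g \<le> ereal r \<longleftrightarrow> (\<forall>e\<in>E. \<forall>e'\<in>E. \<forall>u\<in>Fw. \<bar>g e u - g e' u\<bar> \<le> r)"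
  by (simp add: inv_dev_def SUP_le_iff)

lemma inv_dev_le_if_close:
  assumes "inv_dev E Fw h \<le> ereal s" "\<And>e u. e \<in> E \<Longrightarrow> u \<in> Fw \<Longrightarrow> \<bar>g e u - h e u\<bar> \<le> r"
  shows "inv_dev E Fw g \<le> ereal (s + 2 * r)"
proof -
  have "\<bar>g e u - g e' u\<bar> \<le> s + 2 * r" if "e \<in> E" "e' \<in> E" "u \<in> Fw" for e e' u
  proof -
    have "\<bar>h e u - h e' u\<bar> \<le> s"
      using assms(1) that by (simp add: inv_dev_le_ereal_iff)
    with assms(2)[OF that(1,3)] assms(2)[OF that(2,3)] show ?thesis
      unfolding abs_le_iff by linarith
  qed
  then show ?thesis
    unfolding inv_dev_le_ereal_iff by blast
qed

lemma inv_dev_mono: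
  "E \<subseteq> E' \<Longrightarrow> inv_dev E Fw g \<le> inv_dev E' Fw g"
  unfolding inv_dev_def by (intro SUP_subset_mono order_refl) auto

lemma inv_set_le_inv_dev:
  assumes "\<Phi> \<in> inv_set Eall P Fw F\<Phi>" "E \<subseteq> Eall"
  shows "inv_dev E Fw (\<lambda>e u. pop_xy (P e) u \<Phi>) \<le> ereal 0"
    and "inv_dev E Fw (\<lambda>e u. pop_sq (P e) u \<Phi>) \<le> ereal 0"
proof -
  from assms(1) have "inv_dev Eall Fw (\<lambda>e u. pop_xy (P e) u \<Phi>) = ereal 0"
    and "inv_dev Eall Fw (\<lambda>e u. pop_sq (P e) u \<Phi>) = ereal 0"
    by (simp_all add: inv_set_def zero_ereal_def)
  with inv_dev_mono[OF assms(2)] show "inv_dev E Fw (\<lambda>e u. pop_xy (P e) u \<Phi>) \<le> ereal 0"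
    and "inv_dev E Fw (\<lambda>e u. pop_sq (P e) u \<Phi>) \<le> ereal 0"
    by metis+
qed

lemma pop_reduced_risk_inv_set:
  assumes "\<Phi> \<in> inv_set Eall P Fw F\<Phi>" "w \<in> Fw" "e \<in> Eall" "e' \<in> Eall"
  shows "pop_reduced_risk (P e) w \<Phi> = pop_reduced_risk (P e') w \<Phi>"
proof -
  have "\<bar>pop_xy (P e) w \<Phi> - pop_xy (P e') w \<Phi>\<bar> \<le> 0"
    and "\<bar>pop_sq (P e) w \<Phi> - pop_sq (P e') w \<Phi>\<bar> \<le> 0"
    using inv_set_le_inv_dev[OF assms(1) order_refl] assms(2-4)
    unfolding inv_dev_le_ereal_iff by blast+
  then show ?thesis
    by (simp add: pop_reduced_risk_def)
qed

lemma ex_nonpos_if_weighted_sum_nonpos: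
  fixes c q :: "'a \<Rightarrow> real"
  assumes "finite A" "A \<noteq> {}" "\<And>a. a \<in> A \<Longrightarrow> c a > 0" "(\<Sum>a\<in>A. c a * q a) \<le> 0"
  shows "\<exists>a\<in>A. q a \<le> 0"
proof (rule ccontr)
  assume "\<not> ?thesis"
  then have "(\<Sum>a\<in>A. c a * q a) > 0"
    using assms(1-3) by (intro sum_pos) auto
  with assms(4) show False by simp
qed

locale fairm_population =
  fixes Eall :: "'env set"
    and P :: "'env \<Rightarrow> ('x \<times> real) measure"
    and Fw :: "('h \<Rightarrow> real) set"
    and F\<Phi> :: "('x \<Rightarrow> 'h) set"
  assumes finite_Eall: "finite Eall"
    and snd_measurable: "\<And>e. e \<in> Eall \<Longrightarrow> snd \<in> borel_measurable (P e)"
    and response_square_integrable: "\<And>e. e \<in> Eall \<Longrightarrow> integrable (P e) (\<lambda>z. (snd z)\<^sup>2)"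
    and predictor_measurable: "\<And>e u \<Phi>. e \<in> Eall \<Longrightarrow> u \<in> Fw \<Longrightarrow> \<Phi> \<in> F\<Phi> \<Longrightarrow>
      (\<lambda>z. u (\<Phi> (fst z))) \<in> borel_measurable (P e)"
    and predictor_square_integrable: "\<And>e u \<Phi>. e \<in> Eall \<Longrightarrow> u \<in> Fw \<Longrightarrow> \<Phi> \<in> F\<Phi> \<Longrightarrow>
      integrable (P e) (\<lambda>z. (u (\<Phi> (fst z)))\<^sup>2)"
begin

lemma risk_diff_eq_pop_reduced_risk_diff:
  assumes "e \<in> Eall" "w \<in> Fw" "\<Phi> \<in> F\<Phi>" "w' \<in> Fw" "\<Phi>' \<in> F\<Phi>"
  shows "risk (P e) (w \<circ> \<Phi>) - risk (P e) (w' \<circ> \<Phi>')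
    = pop_reduced_risk (P e) w \<Phi> - pop_reduced_risk (P e) w' \<Phi>'"
proof -
  have "risk (P e) (v \<circ> \<psi>) = (\<integral>z. (snd z)\<^sup>2 \<partial>P e) + pop_reduced_risk (P e) v \<psi>"
    if "v \<in> Fw" "\<psi> \<in> F\<Phi>" for v \<psi>
    by (rule risk_comp_eq_pop_reduced_risk)
      (use assms(1) that snd_measurable response_square_integrable predictor_measurable
        predictor_square_integrable in auto)
  then show ?thesis
    using assms(2-5) by simp
qed

end

locale fairm_good_sample = fairm_population Eall P Fw F\<Phi>
  for Eall :: "'env set"
    and P :: "'env \<Rightarrow> ('x \<times> real) measure"
    and Fw :: "('h \<Rightarrow> real) set"
    and F\<Phi> :: "('x \<Rightarrow> 'h) set" +
  fixes Etr :: "'env set"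
    and n :: "'env \<Rightarrow> nat"
    and X :: "'env \<Rightarrow> nat \<Rightarrow> 'x"
    and Y :: "'env \<Rightarrow> nat \<Rightarrow> real"
    and \<rho>1 \<rho>2 :: real
  assumes Etr_subset: "Etr \<subseteq> Eall"
    and Etr_nonempty: "Etr \<noteq> {}"
    and n_pos: "\<And>e. e \<in> Etr \<Longrightarrow> n e > 0"
    and emp_xy_close: "\<And>e u \<Phi>. e \<in> Etr \<Longrightarrow> u \<in> Fw \<Longrightarrow> \<Phi> \<in> F\<Phi> \<Longrightarrow>
      \<bar>emp_xy n X Y e u \<Phi> - pop_xy (P e) u \<Phi>\<bar> \<le> \<rho>1 / 2"
    and emp_sq_close: "\<And>e u \<Phi>. e \<in> Etr \<Longrightarrow> u \<in> Fw \<Longrightarrow> \<Phi> \<in> F\<Phi> \<Longrightarrow>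
      \<bar>emp_sq n X e u \<Phi> - pop_sq (P e) u \<Phi>\<bar> \<le> \<rho>2 / 2"
    and separation: "\<And>\<Phi>. \<Phi> \<in> F\<Phi> - inv_set Eall P Fw F\<Phi> \<Longrightarrow>
      inv_dev Etr Fw (\<lambda>e u. pop_xy (P e) u \<Phi>) > ereal (2 * \<rho>1) \<or>
      inv_dev Etr Fw (\<lambda>e u. pop_sq (P e) u \<Phi>) > ereal (2 * \<rho>2)"
begin

lemma fairm_feasible_imp_inv_set:
  assumes "(w, \<Phi>) \<in> fairm_feasible Etr n X Y Fw F\<Phi> \<rho>1 \<rho>2"
  shows "\<Phi> \<in> inv_set Eall P Fw F\<Phi>"
proof (rule ccontr)
  assume "\<Phi> \<notin> inv_set Eall P Fw F\<Phi>"
  moreover have \<Phi>: "\<Phi> \<in> F\<Phi>"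
    using assms by (simp add: fairm_feasible_def)
  moreover have "inv_dev Etr Fw (\<lambda>e u. pop_xy (P e) u \<Phi>) \<le> ereal (\<rho>1 + 2 * (\<rho>1 / 2))"
  proof (rule inv_dev_le_if_close)
    show "inv_dev Etr Fw (\<lambda>e u. emp_xy n X Y e u \<Phi>) \<le> ereal \<rho>1"
      using assms by (simp add: fairm_feasible_def)
  qed (subst abs_minus_commute, rule emp_xy_close[OF _ _ \<Phi>])
  moreover have "inv_dev Etr Fw (\<lambda>e u. pop_sq (P e) u \<Phi>) \<le> ereal (\<rho>2 + 2 * (\<rho>2 / 2))"
  proof (rule inv_dev_le_if_close)
    show "inv_dev Etr Fw (\<lambda>e u. emp_sq n X e u \<Phi>) \<le> ereal \<rho>2"
      using assms by (simp add: fairm_feasible_def)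
  qed (subst abs_minus_commute, rule emp_sq_close[OF _ _ \<Phi>])
  ultimately show False
    using separation[of \<Phi>] by (auto dest: leD)
qed

lemma inv_set_imp_fairm_feasible:
  assumes "w \<in> Fw" "\<Phi> \<in> inv_set Eall P Fw F\<Phi>"
  shows "(w, \<Phi>) \<in> fairm_feasible Etr n X Y Fw F\<Phi> \<rho>1 \<rho>2"
proof -
  have \<Phi>: "\<Phi> \<in> F\<Phi>"
    using assms(2) by (simp add: inv_set_def)
  have "inv_dev Etr Fw (\<lambda>e u. emp_xy n X Y e u \<Phi>) \<le> ereal (0 + 2 * (\<rho>1 / 2))"
    using inv_set_le_inv_dev(1)[OF assms(2) Etr_subset] emp_xy_close[OF _ _ \<Phi>]
    by (rule inv_dev_le_if_close)
  moreover have "inv_dev Etr Fw (\<lambda>e u. emp_sq n X e u \<Phi>) \<le> ereal (0 + 2 * (\<rho>2 / 2))"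
    using inv_set_le_inv_dev(2)[OF assms(2) Etr_subset] emp_sq_close[OF _ _ \<Phi>]
    by (rule inv_dev_le_if_close)
  ultimately show ?thesis
    using assms(1) \<Phi> by (simp add: fairm_feasible_def)
qed

lemma emp_reduced_risk_close:
  assumes "e \<in> Etr" "w \<in> Fw" "\<Phi> \<in> F\<Phi>"
  shows "\<bar>emp_reduced_risk n X Y e w \<Phi> - pop_reduced_risk (P e) w \<Phi>\<bar> \<le> \<rho>1 + \<rho>2 / 2"
  using emp_xy_close[OF assms] emp_sq_close[OF assms]
  unfolding emp_reduced_risk_def pop_reduced_risk_def abs_le_iff by linarith

lemma fairm_emp_reduced_risk_le:
  assumes est: "(w, \<Phi>) \<in> fairm_emp Etr n X Y Fw F\<Phi> \<rho>1 \<rho>2"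
    and w': "w' \<in> Fw" and \<Phi>': "\<Phi>' \<in> inv_set Eall P Fw F\<Phi>"
    and e: "e \<in> Eall"
  shows "pop_reduced_risk (P e) w \<Phi> - pop_reduced_risk (P e) w' \<Phi>' \<le> 2 * \<rho>1 + \<rho>2"
proof -
  have feasible: "(w, \<Phi>) \<in> fairm_feasible Etr n X Y Fw F\<Phi> \<rho>1 \<rho>2"
    and optimal: "emp_loss Etr n X Y (w \<circ> \<Phi>) \<le> emp_loss Etr n X Y (w' \<circ> \<Phi>')"
    using est inv_set_imp_fairm_feasible[OF w' \<Phi>'] by (auto simp: fairm_emp_def)
  then have w: "w \<in> Fw" "\<Phi> \<in> F\<Phi>" and \<Phi>: "\<Phi> \<in> inv_set Eall P Fw F\<Phi>"
    using fairm_feasible_imp_inv_set by (auto simp: fairm_feasible_def)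
  have "\<Phi>' \<in> F\<Phi>"
    using \<Phi>' by (simp add: inv_set_def)
  obtain e' where e': "e' \<in> Etr"
    and "emp_reduced_risk n X Y e' w \<Phi> - emp_reduced_risk n X Y e' w' \<Phi>' \<le> 0"
    using ex_nonpos_if_weighted_sum_nonpos[OF finite_subset[OF Etr_subset finite_Eall] Etr_nonempty,
        of "\<lambda>e. real (n e)" "\<lambda>e. emp_reduced_risk n X Y e w \<Phi> - emp_reduced_risk n X Y e w' \<Phi>'"]
      n_pos optimal
    by (auto simp: emp_loss_comp_eq right_diff_distrib sum_subtractf)
  moreover have "e' \<in> Eall"
    using e' Etr_subset by blast
  \<comment> \<open>by invariance of \<Phi> and \<Phi>' the population excess at e equals the one at e'\<close>
  ultimately show ?thesis
    using pop_reduced_risk_inv_set[OF \<Phi> w(1) e \<open>e' \<in> Eall\<close>]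
      pop_reduced_risk_inv_set[OF \<Phi>' w' e \<open>e' \<in> Eall\<close>]
      emp_reduced_risk_close[OF e' w] emp_reduced_risk_close[OF e' w' \<open>\<Phi>' \<in> F\<Phi>\<close>]
    unfolding abs_le_iff by linarith
qed

lemma fairm_emp_excess_risk_le:
  assumes est: "(w, \<Phi>) \<in> fairm_emp Etr n X Y Fw F\<Phi> \<rho>1 \<rho>2"
    and w': "w' \<in> Fw" and \<Phi>': "\<Phi>' \<in> inv_set Eall P Fw F\<Phi>"
  shows "Max ((\<lambda>e. risk (P e) (w \<circ> \<Phi>) - risk (P e) (w' \<circ> \<Phi>')) ` Eall) \<le> 2 * \<rho>1 + \<rho>2"
proof -
  have "w \<in> Fw" "\<Phi> \<in> F\<Phi>" "\<Phi>' \<in> F\<Phi>"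
    using est \<Phi>' by (auto simp: fairm_emp_def fairm_feasible_def inv_set_def)
  then have "risk (P e) (w \<circ> \<Phi>) - risk (P e) (w' \<circ> \<Phi>') \<le> 2 * \<rho>1 + \<rho>2" if "e \<in> Eall" for e
    using risk_diff_eq_pop_reduced_risk_diff[OF that _ _ w'] fairm_emp_reduced_risk_le[OF est w' \<Phi>' that]
    by simp
  moreover have "Eall \<noteq> {}"
    using Etr_subset Etr_nonempty by blast
  ultimately show ?thesis
    using finite_Eall by (simp add: Max_le_iff)
qed

end

theorem theorem1:
  fixes M :: "'\<omega> measure"
    and Eall Etr :: "'env set"
    and P :: "'env \<Rightarrow> ((real^'p::finite) \<times> real) measure"
    and \<alpha> :: "'env \<Rightarrow> real"
    and Fw :: "('h \<Rightarrow> real) set"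
    and F\<Phi> :: "(real^'p \<Rightarrow> 'h) set"
    and n :: "'env \<Rightarrow> nat"
    and X :: "'env \<Rightarrow> nat \<Rightarrow> '\<omega> \<Rightarrow> real^'p"
    and Y :: "'env \<Rightarrow> nat \<Rightarrow> '\<omega> \<Rightarrow> real"
    and \<rho>1 \<rho>2 c :: "nat \<Rightarrow> real"
    and N :: nat
    and wstar :: "'h \<Rightarrow> real" and \<Phi>star :: "real^'p \<Rightarrow> 'h"
  assumes M: "prob_space M"
    and Eall: "finite Eall" "Etr \<subseteq> Eall" "Etr \<noteq> {}"
    and P: "\<And>e. e \<in> Eall \<Longrightarrow> prob_space (P e) \<and> sets (P e) = sets borel"
    and alpha: "\<And>e. e \<in> Eall \<Longrightarrow> \<alpha> e > 0" "(\<Sum>e\<in>Eall. \<alpha> e) = 1"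
    and moments: "\<And>e. e \<in> Eall \<Longrightarrow> integrable (P e) (\<lambda>z. (snd z)\<^sup>2)"
      "\<And>e u \<Phi>. e \<in> Eall \<Longrightarrow> u \<in> Fw \<Longrightarrow> \<Phi> \<in> F\<Phi> \<Longrightarrow> (\<lambda>z. u (\<Phi> (fst z))) \<in> borel_measurable (P e)"
      "\<And>e u \<Phi>. e \<in> Eall \<Longrightarrow> u \<in> Fw \<Longrightarrow> \<Phi> \<in> F\<Phi> \<Longrightarrow> integrable (P e) (\<lambda>z. (u (\<Phi> (fst z)))\<^sup>2)"
    and n_pos: "\<And>e. e \<in> Etr \<Longrightarrow> n e > 0"
    and samples_law: "\<And>e i. e \<in> Etr \<Longrightarrow> i < n e \<Longrightarrow>
        (\<lambda>\<omega>. (X e i \<omega>, Y e i \<omega>)) \<in> borel_measurable M \<and> distr M borel (\<lambda>\<omega>. (X e i \<omega>, Y e i \<omega>)) = P e"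
    and samples_indep: "\<And>e. e \<in> Etr \<Longrightarrow>
        prob_space.indep_vars M (\<lambda>_. borel) (\<lambda>i \<omega>. (X e i \<omega>, Y e i \<omega>)) {..<n e}"
    and rho_pos: "\<rho>1 N > 0" "\<rho>2 N > 0"
    and c_lim: "c \<longlonglongrightarrow> 0"
    and conc1: "measure M {\<omega>\<in>space M.
        (SUP e\<in>Etr. SUP u\<in>Fw. SUP \<Phi>\<in>F\<Phi>.
           ereal \<bar>emp_xy n (\<lambda>e i. X e i \<omega>) (\<lambda>e i. Y e i \<omega>) e u \<Phi> - pop_xy (P e) u \<Phi>\<bar>)
        \<le> ereal (\<rho>1 N / 2)} \<ge> 1 - c N"
    and conc2: "measure M {\<omega>\<in>space M.
        (SUP e\<in>Etr. SUP u\<in>Fw. SUP \<Phi>\<in>F\<Phi>.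
           ereal \<bar>emp_sq n (\<lambda>e i. X e i \<omega>) e u \<Phi> - pop_sq (P e) u \<Phi>\<bar>)
        \<le> ereal (\<rho>2 N / 2)} \<ge> 1 - c N"
    and separation: "\<And>\<Phi>. \<Phi> \<in> F\<Phi> - inv_set Eall P Fw F\<Phi> \<Longrightarrow>
        inv_dev Etr Fw (\<lambda>e u. pop_xy (P e) u \<Phi>) > ereal (2 * \<rho>1 N) \<or>
        inv_dev Etr Fw (\<lambda>e u. pop_sq (P e) u \<Phi>) > ereal (2 * \<rho>2 N)"
    and inv_nonempty: "inv_set Eall P Fw F\<Phi> \<noteq> {}"
    and star: "(wstar, \<Phi>star) \<in> fairm_full Eall \<alpha> P Fw F\<Phi>"
  shows "\<exists>A\<in>sets M. measure M A \<ge> 1 - 2 * c N \<and>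
     (\<forall>\<omega>\<in>A. \<forall>(w, \<Phi>) \<in> fairm_emp Etr n (\<lambda>e i. X e i \<omega>) (\<lambda>e i. Y e i \<omega>) Fw F\<Phi> (\<rho>1 N) (\<rho>2 N).
        Max ((\<lambda>e. risk (P e) (w \<circ> \<Phi>) - risk (P e) (wstar \<circ> \<Phi>star)) ` Eall)
          \<le> 4 * \<rho>1 N + 2 * \<rho>2 N)"
proof -
  interpret M: prob_space M by (rule M)
  have population: "fairm_population Eall P Fw F\<Phi>"
  proof
    fix e assume "e \<in> Eall"
    have "snd \<in> borel_measurable (borel :: ((real^'p) \<times> real) measure)"
      by (intro borel_measurable_continuous_onI continuous_on_snd continuous_on_id)
    then show "snd \<in> borel_measurable (P e)"
      using P[OF \<open>e \<in> Eall\<close>] by (subst measurable_cong_sets[OF _ refl]) auto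
  qed (use Eall(1) moments in auto)
  from star have wstar: "wstar \<in> Fw" and \<Phi>star: "\<Phi>star \<in> inv_set Eall P Fw F\<Phi>"
    by (auto simp: fairm_full_def)
  have rho_le: "2 * \<rho>1 N + \<rho>2 N \<le> 4 * \<rho>1 N + 2 * \<rho>2 N"
    using rho_pos by simp
  show ?thesis
  proof (rule M.ex_likely_event_if_two_likely[OF conc1 conc2], goal_cases)
    case (1 \<omega>)
    interpret fairm_good_sample Eall P Fw F\<Phi> Etr n "\<lambda>e i. X e i \<omega>" "\<lambda>e i. Y e i \<omega>" "\<rho>1 N" "\<rho>2 N"
      using population Eall(2,3) n_pos separation 1(2,3)
      by (intro fairm_good_sample.intro fairm_good_sample_axioms.intro) (simp_all add: SUP_le_iff)
    show ?case
      using fairm_emp_excess_risk_le[OF _ wstar \<Phi>star] by (auto intro: order_trans[OF _ rho_le])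
  qed
qed

end
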